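(* Let $H\in\mathbb R^{n\times n}$, $f\in\mathbb R^n$, $A\in\mathbb R^{m\times n}$, $b\in\mathbb R^m$, with $\mathcal X=\{x: Ax\le b\}$ nonempty and $H+H^\top$ positive definite. Let $x^*$ be the unique solution of the AVI: find $x\in\mathcal X$ with $(Hx+f)^\top(y-x)\ge0$ for all $y\in\mathcal X$, let $\mathcal A=\{i: A_ix^*=b_i\}$, assume the rows of $A_{\mathcal A}$ are linearly independent, let $\lambda^*$ be the unique vector with $Hx^*+f+A^\top\lambda^*=0$, $0\le\lambda^*\perp b-Ax^*\ge0$, and assume $\lambda^*_i>0$ for all $i\in\mathcal A$. Fix $\rho>0$. Then there is a neighborhood $U$ of $x^*$ such that for all $z\in U$, $\mathcal A_{\mathrm{QP}}(z)=\mathcal A$.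
   Context: $A_i$, $b_i$ are the $i$-th row of $A$ and entry of $b$; $A_{\mathcal S}$ is the submatrix of rows indexed by $\mathcal S$. $H_s=\tfrac12(H+H^\top)$, $\tilde H=\rho I+H_s$, $\tilde f(z)=f+(H-\tilde H)z$. For $z\in\mathbb R^n$, $\mathcal S_x(z)$ is the unique minimizer of the quadratic program $\min_x\tfrac12x^\top\tilde Hx+\tilde f(z)^\top x$ subject to $Ax\le b$, and $\mathcal A_{\mathrm{QP}}(z)=\{i\in\{1,\dots,m\}: A_i\mathcal S_x(z)=b_i\}$ is its active set. *)

theory Defs
  imports "HOL-Analysis.Analysis"
begin

definition polyhedron :: "real^'n^'m \<Rightarrow> real^'m \<Rightarrow> (real^'n) set" where
  "polyhedron A b = {x. \<forall>i. (A *v x) $ i \<le> b $ i}"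

definition is_AVI_sol :: "real^'n^'n \<Rightarrow> real^'n \<Rightarrow> real^'n^'m \<Rightarrow> real^'m \<Rightarrow> real^'n \<Rightarrow> bool" where
  "is_AVI_sol H f A b x \<longleftrightarrow> x \<in> polyhedron A b \<and>
     (\<forall>y \<in> polyhedron A b. (H *v x + f) \<bullet> (y - x) \<ge> 0)"

definition active_set :: "real^'n^'m \<Rightarrow> real^'m \<Rightarrow> real^'n \<Rightarrow> 'm set" where
  "active_set A b x = {i. (A *v x) $ i = b $ i}"

definition Hsym :: "real^'n^'n \<Rightarrow> real^'n^'n" where
  "Hsym H = (1/2) *\<^sub>R (H + transpose H)"

definition Htilde :: "real \<Rightarrow> real^'n^'n \<Rightarrow> real^'n^'n" where
  "Htilde \<rho> H = \<rho> *\<^sub>R mat 1 + Hsym H"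

definition ftilde :: "real \<Rightarrow> real^'n^'n \<Rightarrow> real^'n \<Rightarrow> real^'n \<Rightarrow> real^'n" where
  "ftilde \<rho> H f z = f + (H - Htilde \<rho> H) *v z"

definition QP_obj :: "real \<Rightarrow> real^'n^'n \<Rightarrow> real^'n \<Rightarrow> real^'n \<Rightarrow> real^'n \<Rightarrow> real" where
  "QP_obj \<rho> H f z x = (1/2) * (x \<bullet> (Htilde \<rho> H *v x)) + ftilde \<rho> H f z \<bullet> x"

definition Sx :: "real \<Rightarrow> real^'n^'n \<Rightarrow> real^'n \<Rightarrow> real^'n^'m \<Rightarrow> real^'m \<Rightarrow> real^'n \<Rightarrow> real^'n" where
  "Sx \<rho> H f A b z = (THE x. x \<in> polyhedron A b \<and>
      (\<forall>y \<in> polyhedron A b. QP_obj \<rho> H f z x \<le> QP_obj \<rho> H f z y))"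

definition A_QP :: "real \<Rightarrow> real^'n^'n \<Rightarrow> real^'n \<Rightarrow> real^'n^'m \<Rightarrow> real^'m \<Rightarrow> real^'n \<Rightarrow> 'm set" where
  "A_QP \<rho> H f A b z = active_set A b (Sx \<rho> H f A b z)"

end

theory Submission
  imports Defs
begin

(* Since rho > 0 and H + H^T is positive semidefinite, the QP matrix rho I + H_s is symmetric and
   rho-strongly positive. Hence S_x(z) is the unique solution of the affine variational inequality
   with data (rho I + H_s, f~(z)) over X, and it is (1/rho)-Lipschitz in f~(z), so continuous in z.
   As (rho I + H_s) z + f~(z) = H z + f, the fixed points of S_x are exactly the solutions of the
   original AVI; in particular S_x(xs) = xs.
   Near xs, continuity keeps the inactive constraints inactive at S_x(z). For an active index i,
   LICQ gives a direction d_i orthogonal to the other active rows with A_i d_i > 0, and the KKT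
   conditions with strict complementarity give (H xs + f)^T d_i = - lam_i A_i d_i < 0. This strict
   inequality persists near xs, so if constraint i were inactive at S_x(z), moving from S_x(z)
   along d_i would remain feasible and violate the variational inequality. *)

definition quadratic :: "real^'n^'n \<Rightarrow> real^'n \<Rightarrow> real^'n \<Rightarrow> real" where
  "quadratic Q c x = (1/2) * (x \<bullet> (Q *v x)) + c \<bullet> x"

definition AVI_sol :: "(real^'n) set \<Rightarrow> real^'n^'n \<Rightarrow> real^'n \<Rightarrow> real^'n \<Rightarrow> bool" where
  "AVI_sol X Q c x \<longleftrightarrow> x \<in> X \<and> (\<forall>y\<in>X. (Q *v x + c) \<bullet> (y - x) \<ge> 0)"

lemma quadratic_add:
  fixes Q :: "real^'n^'n"
  assumes sym: "\<And>x y. x \<bullet> (Q *v y) = y \<bullet> (Q *v x)"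
  shows "quadratic Q c (x + h) = quadratic Q c x + (Q *v x + c) \<bullet> h + (1/2) * (h \<bullet> (Q *v h))"
proof -
  have "(x + h) \<bullet> (Q *v (x + h)) = x \<bullet> (Q *v x) + 2 * (h \<bullet> (Q *v x)) + h \<bullet> (Q *v h)"
    using sym[of x h] by (simp add: matrix_vector_right_distrib inner_add_left inner_add_right)
  then show ?thesis
    unfolding quadratic_def by (simp add: inner_add_left inner_add_right inner_commute algebra_simps)
qed

lemma quadratic_min_imp_AVI_sol:
  fixes Q :: "real^'n^'n"
  assumes sym: "\<And>x y. x \<bullet> (Q *v y) = y \<bullet> (Q *v x)"
    and psd: "\<And>x. 0 \<le> x \<bullet> (Q *v x)"
    and "convex X" and x: "x \<in> X"
    and min: "\<forall>y\<in>X. quadratic Q c x \<le> quadratic Q c y"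
  shows "AVI_sol X Q c x"
  unfolding AVI_sol_def
proof (intro conjI ballI x, rule ccontr)
  fix y assume y: "y \<in> X"
  define G where "G = (Q *v x + c) \<bullet> (y - x)"
  define K where "K = (y - x) \<bullet> (Q *v (y - x))"
  assume "\<not> 0 \<le> (Q *v x + c) \<bullet> (y - x)"
  then have G: "G < 0" by (simp add: G_def)
  have K: "K \<ge> 0" using psd by (simp add: K_def)
  \<comment> \<open>t \<le> 1 keeps the step in X; t (K + 1) \<le> -G makes the quadratic term lose against t G\<close>
  define t where "t = min 1 (-G / (K + 1))"
  have t: "0 < t" "t \<le> 1" using G K by (auto simp: t_def divide_less_0_iff)
  have tK: "t * K < -G"
  proof -
    have "t * (K + 1) \<le> (-G / (K + 1)) * (K + 1)"
      using K by (intro mult_right_mono) (auto simp: t_def)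
    then have "t * (K + 1) \<le> -G" using K by simp
    then show ?thesis using t by (simp add: algebra_simps)
  qed
  have "x + t *\<^sub>R (y - x) = (1 - t) *\<^sub>R x + t *\<^sub>R y" by (simp add: algebra_simps)
  with \<open>convex X\<close> x y t have "x + t *\<^sub>R (y - x) \<in> X" by (simp add: convex_def)
  then have "quadratic Q c x \<le> quadratic Q c (x + t *\<^sub>R (y - x))" using min by blast
  also have "\<dots> = quadratic Q c x + t * (G + (1/2) * (t * K))"
    unfolding quadratic_add[OF sym] by (simp add: G_def K_def matrix_vector_mult_scaleR algebra_simps)
  finally have "0 \<le> G + (1/2) * (t * K)" using t by (simp add: zero_le_mult_iff)
  then show False using tK G by linarith
qed

lemma AVI_sol_lipschitz:
  fixes Q :: "real^'n^'n"
  assumes strong: "\<And>h. \<rho> * (h \<bullet> h) \<le> h \<bullet> (Q *v h)"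
    and "AVI_sol X Q c1 x1" and "AVI_sol X Q c2 x2"
  shows "\<rho> * norm (x1 - x2) \<le> norm (c1 - c2)"
proof -
  have "0 \<le> (Q *v x1 + c1) \<bullet> (x2 - x1) + (Q *v x2 + c2) \<bullet> (x1 - x2)"
    using assms(2,3) by (simp add: AVI_sol_def add_nonneg_nonneg)
  also have "\<dots> = - ((x1 - x2) \<bullet> (Q *v (x1 - x2))) - (c1 - c2) \<bullet> (x1 - x2)"
    by (simp add: matrix_vector_mult_diff_distrib inner_diff_left inner_diff_right inner_add_left
        inner_add_right algebra_simps del: vec.diff) (simp add: inner_commute)
  finally have "\<rho> * (norm (x1 - x2) * norm (x1 - x2)) \<le> - ((c1 - c2) \<bullet> (x1 - x2))"
    using strong[of "x1 - x2"] by (simp add: dot_square_norm power2_eq_square)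
  also have "\<dots> \<le> norm (c1 - c2) * norm (x1 - x2)"
    using Cauchy_Schwarz_ineq2[of "c1 - c2" "x1 - x2"] by simp
  finally have "norm (x1 - x2) * (\<rho> * norm (x1 - x2)) \<le> norm (x1 - x2) * norm (c1 - c2)"
    by (simp add: algebra_simps)
  then show ?thesis by (cases "x1 = x2") auto
qed

lemma AVI_sol_unique:
  fixes Q :: "real^'n^'n"
  assumes "\<And>h. \<rho> * (h \<bullet> h) \<le> h \<bullet> (Q *v h)" and "\<rho> > 0"
    and "AVI_sol X Q c x1" and "AVI_sol X Q c x2"
  shows "x1 = x2"
  using AVI_sol_lipschitz[OF assms(1,3,4)] \<open>\<rho> > 0\<close> by (simp add: mult_le_0_iff)

lemma quadratic_growth_bound:
  fixes r C M \<rho> :: real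
  assumes "\<rho> > 0" and "r \<ge> 0" and "\<rho> * (r * r) / 2 - C * r \<le> M"
  shows "r \<le> 2 * (\<bar>C\<bar> + \<bar>M\<bar>) / \<rho> + 1"
proof (cases "r \<le> 1")
  case False
  have "\<rho> * (r * r) / 2 \<le> \<bar>M\<bar> * r + \<bar>C\<bar> * r"
    using assms False by (smt (verit) abs_ge_self mult_right_mono mult_le_cancel_left1)
  then have "r * (\<rho> * r / 2) \<le> r * (\<bar>C\<bar> + \<bar>M\<bar>)" by (simp add: algebra_simps)
  then have "\<rho> * r / 2 \<le> \<bar>C\<bar> + \<bar>M\<bar>" using False by simp
  then show ?thesis using \<open>\<rho> > 0\<close> by (simp add: field_simps)
qed (use assms in \<open>auto intro: add_increasing\<close>)

lemma quadratic_attains_min: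
  fixes Q :: "real^'n^'n"
  assumes strong: "\<And>x. \<rho> * (x \<bullet> x) \<le> x \<bullet> (Q *v x)" and "\<rho> > 0"
    and "closed X" and "X \<noteq> {}"
  shows "\<exists>x\<in>X. \<forall>y\<in>X. quadratic Q c x \<le> quadratic Q c y"
proof -
  obtain x0 where x0: "x0 \<in> X" using \<open>X \<noteq> {}\<close> by blast
  have cont: "continuous_on UNIV (quadratic Q c)"
    unfolding quadratic_def by (intro continuous_intros)
  define S where "S = X \<inter> {x. quadratic Q c x \<le> quadratic Q c x0}"
  have "closed S"
    unfolding S_def by (intro closed_Int \<open>closed X\<close> closed_Collect_le cont continuous_on_const)
  moreover have "bounded S"
    unfolding bounded_iff
  proof (intro exI ballI)
    fix x assume "x \<in> S"
    then have "quadratic Q c x \<le> quadratic Q c x0" by (simp add: S_def)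
    moreover have "- (norm c * norm x) \<le> c \<bullet> x"
      using Cauchy_Schwarz_ineq2[of c x] by (simp add: abs_le_iff)
    moreover have "\<rho> * (norm x * norm x) \<le> x \<bullet> (Q *v x)"
      using strong[of x] by (simp add: dot_square_norm power2_eq_square)
    ultimately have "\<rho> * (norm x * norm x) / 2 - norm c * norm x \<le> quadratic Q c x0"
      unfolding quadratic_def by linarith
    then show "norm x \<le> 2 * (\<bar>norm c\<bar> + \<bar>quadratic Q c x0\<bar>) / \<rho> + 1"
      using \<open>\<rho> > 0\<close> by (intro quadratic_growth_bound) auto
  qed
  ultimately have "compact S" by (simp add: compact_eq_bounded_closed)
  moreover have "S \<noteq> {}" using x0 by (auto simp: S_def)
  ultimately obtain x where x: "x \<in> S" and min: "\<forall>y\<in>S. quadratic Q c x \<le> quadratic Q c y"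
    using continuous_attains_inf continuous_on_subset[OF cont] by (metis subset_UNIV)
  have "quadratic Q c x \<le> quadratic Q c y" if "y \<in> X" for y
    using that min x by (cases "quadratic Q c y \<le> quadratic Q c x0") (auto simp: S_def)
  then show ?thesis using x by (auto simp: S_def)
qed

lemma matrix_vector_mult_row: "(A *v x) $ i = row i A \<bullet> (x :: real^'n)"
  by (simp add: matrix_vector_mult_def row_def inner_vec_def mult.commute)

lemma polyhedron_eq_INT: "polyhedron A b = (\<Inter>i. {x. row i A \<bullet> x \<le> b $ i})"
  by (auto simp: polyhedron_def matrix_vector_mult_row)

lemma closed_polyhedron: "closed (polyhedron A b)"
  unfolding polyhedron_eq_INT by (intro closed_INT closed_halfspace_le ballI)

lemma convex_polyhedron: "convex (polyhedron A b)"
  unfolding polyhedron_eq_INT by (intro convex_INT convex_halfspace_le ballI)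

lemma polyhedron_feasible_direction:
  assumes x: "x \<in> polyhedron A b"
    and slack: "\<And>j. (A *v d) $ j > 0 \<Longrightarrow> (A *v x) $ j < b $ j"
  shows "\<exists>t>0. x + t *\<^sub>R d \<in> polyhedron A b"
proof -
  have "\<forall>\<^sub>F t in at_right 0. (A *v (x + t *\<^sub>R d)) $ j \<le> b $ j" for j
  proof (cases "(A *v d) $ j > 0")
    case True
    have "((\<lambda>t. (A *v x) $ j + t * (A *v d) $ j) \<longlongrightarrow> (A *v x) $ j) (at_right 0)"
      by (auto intro!: tendsto_eq_intros)
    then have "\<forall>\<^sub>F t in at_right 0. (A *v x) $ j + t * (A *v d) $ j < b $ j"
      using slack[OF True] by (rule order_tendstoD(2))
    then show ?thesis
      by eventually_elim (simp add: matrix_vector_right_distrib matrix_vector_mult_scaleR)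
  next
    case False
    have "\<forall>\<^sub>F t in at_right 0. t > (0::real)" by (rule eventually_at_right_less)
    then show ?thesis
    proof eventually_elim
      case (elim t)
      have "(A *v x) $ j \<le> b $ j" using x by (simp add: polyhedron_def)
      moreover have "t * (A *v d) $ j \<le> 0" using False elim by (simp add: mult_nonneg_nonpos)
      ultimately show ?case by (simp add: matrix_vector_right_distrib matrix_vector_mult_scaleR)
    qed
  qed
  then have "\<forall>\<^sub>F t in at_right 0. t > (0::real) \<and> x + t *\<^sub>R d \<in> polyhedron A b"
    unfolding polyhedron_def
    by (intro eventually_conj eventually_at_right_less) (simp add: eventually_all_finite)
  then show ?thesis using eventually_happens'[OF trivial_limit_at_right_real] by blast
qed

lemma span_image_eq_sum:
  fixes f :: "'i \<Rightarrow> 'a::real_vector"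
  assumes "x \<in> span (f ` I)" and "finite I"
  shows "\<exists>c. x = (\<Sum>j\<in>I. c j *\<^sub>R f j)"
proof -
  let ?C = "{x. \<exists>c. x = (\<Sum>j\<in>I. c j *\<^sub>R f j)}"
  have "subspace ?C"
    unfolding subspace_def
  proof (intro conjI ballI allI)
    show "0 \<in> ?C" by (auto intro!: exI[of _ "\<lambda>_. 0"])
  next
    fix x y assume "x \<in> ?C" "y \<in> ?C"
    then obtain c d where "x = (\<Sum>j\<in>I. c j *\<^sub>R f j)" "y = (\<Sum>j\<in>I. d j *\<^sub>R f j)" by auto
    then have "x + y = (\<Sum>j\<in>I. (c j + d j) *\<^sub>R f j)" by (simp add: sum.distrib scaleR_add_left)
    then show "x + y \<in> ?C" by (auto intro!: exI[of _ "\<lambda>j. c j + d j"])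
  next
    fix k x assume "x \<in> ?C"
    then obtain c where "x = (\<Sum>j\<in>I. c j *\<^sub>R f j)" by auto
    then have "k *\<^sub>R x = (\<Sum>j\<in>I. (k * c j) *\<^sub>R f j)" by (simp add: scaleR_sum_right)
    then show "k *\<^sub>R x \<in> ?C" by (auto intro!: exI[of _ "\<lambda>j. k * c j"])
  qed
  moreover have "f ` I \<subseteq> ?C"
  proof
    fix x assume "x \<in> f ` I"
    then obtain i where "i \<in> I" "x = f i" by auto
    then have "x = (\<Sum>j\<in>I. (if j = i then 1 else 0) *\<^sub>R f j)"
      using \<open>finite I\<close> by (simp add: if_distrib[of "\<lambda>a. a *\<^sub>R _"] cong: if_cong)
    then show "x \<in> ?C" by (auto intro!: exI[of _ "\<lambda>j. if j = i then 1 else 0"])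
  qed
  ultimately show ?thesis using span_minimal assms(1) by blast
qed

lemma independent_rows_separating_direction:
  fixes A :: "real^'n^'m"
  assumes indep: "\<And>c. (\<Sum>j\<in>I. c j *\<^sub>R row j A) = 0 \<Longrightarrow> (\<forall>j\<in>I. c j = 0)"
    and "finite I" and i: "i \<in> I"
  shows "\<exists>d. (\<forall>j\<in>I - {i}. row j A \<bullet> d = 0) \<and> row i A \<bullet> d > 0"
proof -
  define S where "S = (\<lambda>j. row j A) ` (I - {i})"
  \<comment> \<open>the component of row i orthogonal to the other rows is the direction sought\<close>
  obtain y w where y: "y \<in> span S" and w: "\<And>v. v \<in> span S \<Longrightarrow> orthogonal w v"
    and eq: "row i A = y + w"
    by (rule orthogonal_subspace_decomp_exists[of S "row i A"]) blast
  have w_orth: "row j A \<bullet> w = 0" if "j \<in> I - {i}" for j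
    using w[of "row j A"] that by (auto simp: S_def orthogonal_def inner_commute intro: span_base)
  have "w \<noteq> 0"
  proof
    assume "w = 0"
    with eq y have "row i A \<in> span S" by simp
    then obtain c where c: "row i A = (\<Sum>j\<in>I - {i}. c j *\<^sub>R row j A)"
      using span_image_eq_sum \<open>finite I\<close> unfolding S_def by blast
    define c' where "c' = c(i := -1)"
    have "(\<Sum>j\<in>I. c' j *\<^sub>R row j A) = c' i *\<^sub>R row i A + (\<Sum>j\<in>I - {i}. c j *\<^sub>R row j A)"
      using \<open>finite I\<close> i by (simp add: sum.remove c'_def)
    then have "(\<Sum>j\<in>I. c' j *\<^sub>R row j A) = 0" using c by (simp add: c'_def)
    then show False using indep i by (fastforce simp: c'_def)
  qed
  moreover have "row i A \<bullet> w = w \<bullet> w"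
    using w[OF y] eq by (simp add: orthogonal_def inner_add_left inner_add_right inner_commute)
  ultimately show ?thesis using w_orth by (intro exI[of _ w]) auto
qed

lemma complementary_slackness:
  fixes lam s :: "real^'m"
  assumes "\<And>j. lam $ j \<ge> 0" and "\<And>j. s $ j \<ge> 0" and "lam \<bullet> s = 0" and "s $ i \<noteq> 0"
  shows "lam $ i = 0"
proof -
  have "(\<Sum>j\<in>UNIV. lam $ j * s $ j) = 0" using assms(3) by (simp add: inner_vec_def)
  then have "\<forall>j\<in>UNIV. lam $ j * s $ j = 0"
    using assms(1,2) by (subst (asm) sum_nonneg_eq_0_iff) auto
  then have "lam $ i * s $ i = 0" by blast
  then show ?thesis using assms(4) by simp
qed

lemma kkt_descent_direction:
  fixes A :: "real^'n^'m"
  assumes kkt: "g + transpose A *v lam = 0"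
    and lam_nn: "\<And>j. lam $ j \<ge> 0" and slack_nn: "\<And>j. (b - A *v x) $ j \<ge> 0"
    and compl: "lam \<bullet> (b - A *v x) = 0"
    and i: "i \<in> active_set A b x" "lam $ i > 0"
    and d: "\<forall>j\<in>active_set A b x - {i}. row j A \<bullet> d = 0" "row i A \<bullet> d > 0"
  shows "g \<bullet> d < 0"
proof -
  have "lam $ j * (A *v d) $ j = (if j = i then lam $ i * (row i A \<bullet> d) else 0)" for j
  proof (cases "j \<in> active_set A b x")
    case False
    then have "lam $ j = 0"
      by (intro complementary_slackness[OF lam_nn slack_nn compl]) (simp add: active_set_def)
    with False i show ?thesis by auto
  qed (use d in \<open>auto simp: matrix_vector_mult_row\<close>)
  then have "lam \<bullet> (A *v d) = lam $ i * (row i A \<bullet> d)" by (simp add: inner_vec_def)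
  moreover have "g = - (transpose A *v lam)" using kkt by (simp add: eq_neg_iff_add_eq_0)
  ultimately have "g \<bullet> d = - (lam $ i * (row i A \<bullet> d))"
    by (simp add: transpose_matrix_vector dot_lmul_matrix)
  then show ?thesis using i d by simp
qed

lemma active_set_eq_if_descent_directions:
  fixes A :: "real^'n^'m"
  assumes sol: "AVI_sol (polyhedron A b) Q c x"
    and inactive: "\<And>j. j \<notin> I \<Longrightarrow> (A *v x) $ j < b $ j"
    and D: "\<And>i. i \<in> I \<Longrightarrow> (\<forall>j\<in>I - {i}. row j A \<bullet> D i = 0) \<and> row i A \<bullet> D i > 0"
    and descent: "\<And>i. i \<in> I \<Longrightarrow> (Q *v x + c) \<bullet> D i < 0"
  shows "active_set A b x = I"
proof
  show "active_set A b x \<subseteq> I" using inactive by (force simp: active_set_def)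
  show "I \<subseteq> active_set A b x"
  proof
    fix i assume i: "i \<in> I"
    have x: "x \<in> polyhedron A b" using sol by (simp add: AVI_sol_def)
    show "i \<in> active_set A b x"
    proof (rule ccontr)
      assume "i \<notin> active_set A b x"
      \<comment> \<open>then no constraint blocks the descent direction D i\<close>
      then have "(A *v x) $ j < b $ j" if "(A *v D i) $ j > 0" for j
        using that x D[OF i] inactive[of j]
        by (cases "j = i"; cases "j \<in> I")
          (auto simp: polyhedron_def active_set_def matrix_vector_mult_row order_less_le)
      then obtain t where t: "t > 0" "x + t *\<^sub>R D i \<in> polyhedron A b"
        using polyhedron_feasible_direction[OF x] by blast
      then have "0 \<le> (Q *v x + c) \<bullet> (t *\<^sub>R D i)" using sol by (fastforce simp: AVI_sol_def)
      then show False using descent[OF i] t by (simp add: zero_le_mult_iff)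
    qed
  qed
qed

lemma Htilde_inner:
  "x \<bullet> (Htilde \<rho> H *v y) = \<rho> * (x \<bullet> y) + (1/2) * (x \<bullet> (H *v y) + y \<bullet> (H *v x))"
proof -
  have "x \<bullet> (transpose H *v y) = y \<bullet> (H *v x)"
    by (simp add: transpose_matrix_vector inner_commute[of x] dot_lmul_matrix)
  then show ?thesis
    by (simp add: Htilde_def Hsym_def matrix_vector_mult_add_rdistrib inner_add_right
        scaleR_matrix_vector_assoc[symmetric])
qed

lemma Htilde_symmetric: "x \<bullet> (Htilde \<rho> H *v y) = y \<bullet> (Htilde \<rho> H *v x)"
  by (simp add: Htilde_inner inner_commute)

lemma Htilde_strongly_monotone:
  assumes "0 \<le> x \<bullet> ((H + transpose H) *v x)"
  shows "\<rho> * (x \<bullet> x) \<le> x \<bullet> (Htilde \<rho> H *v x)"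
proof -
  have "x \<bullet> ((H + transpose H) *v x) = 2 * (x \<bullet> (H *v x))"
    by (simp add: matrix_vector_mult_add_rdistrib inner_add_right transpose_matrix_vector
        inner_commute[of x "x v* H"] dot_lmul_matrix)
  then show ?thesis using assms by (simp add: Htilde_inner)
qed

lemma Htilde_ftilde: "Htilde \<rho> H *v z + ftilde \<rho> H f z = H *v z + f"
  by (simp add: ftilde_def matrix_vector_mult_diff_rdistrib)

lemma QP_obj_eq_quadratic: "QP_obj \<rho> H f z = quadratic (Htilde \<rho> H) (ftilde \<rho> H f z)"
  by (simp add: fun_eq_iff QP_obj_def quadratic_def)

context
  fixes \<rho> :: real and H :: "real^'n^'n" and f :: "real^'n" and A :: "real^'n^'m" and b :: "real^'m"
  assumes rho: "\<rho> > 0"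
    and monotone: "\<And>x. 0 \<le> x \<bullet> ((H + transpose H) *v x)"
    and nonempty: "polyhedron A b \<noteq> {}"
begin

lemma Sx_AVI_sol: "AVI_sol (polyhedron A b) (Htilde \<rho> H) (ftilde \<rho> H f z) (Sx \<rho> H f A b z)"
proof -
  let ?P = "polyhedron A b" and ?q = "quadratic (Htilde \<rho> H) (ftilde \<rho> H f z)"
  note strong = Htilde_strongly_monotone[OF monotone]
  have psd: "0 \<le> x \<bullet> (Htilde \<rho> H *v x)" for x
    using order_trans[OF mult_nonneg_nonneg[OF less_imp_le[OF rho] inner_ge_zero] strong] .
  have min_imp_sol: "AVI_sol ?P (Htilde \<rho> H) (ftilde \<rho> H f z) x"
    if "x \<in> ?P \<and> (\<forall>y\<in>?P. ?q x \<le> ?q y)" for x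
    using quadratic_min_imp_AVI_sol[OF Htilde_symmetric psd convex_polyhedron] that by blast
  obtain x where x: "x \<in> ?P \<and> (\<forall>y\<in>?P. ?q x \<le> ?q y)"
    using quadratic_attains_min[OF strong rho closed_polyhedron nonempty] by blast
  have "\<exists>!x. x \<in> ?P \<and> (\<forall>y\<in>?P. ?q x \<le> ?q y)"
    using x AVI_sol_unique[OF strong rho min_imp_sol min_imp_sol] by blast
  then have "Sx \<rho> H f A b z \<in> ?P \<and> (\<forall>y\<in>?P. ?q (Sx \<rho> H f A b z) \<le> ?q y)"
    unfolding Sx_def QP_obj_eq_quadratic by (rule theI')
  then show ?thesis by (rule min_imp_sol)
qed

lemma Sx_eqI:
  assumes "AVI_sol (polyhedron A b) (Htilde \<rho> H) (ftilde \<rho> H f z) x"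
  shows "Sx \<rho> H f A b z = x"
  using AVI_sol_unique[OF Htilde_strongly_monotone[OF monotone] rho Sx_AVI_sol assms] .

lemma Sx_fixed_point_iff: "Sx \<rho> H f A b z = z \<longleftrightarrow> is_AVI_sol H f A b z"
proof -
  have "AVI_sol (polyhedron A b) (Htilde \<rho> H) (ftilde \<rho> H f z) z \<longleftrightarrow> is_AVI_sol H f A b z"
    by (simp add: AVI_sol_def is_AVI_sol_def Htilde_ftilde)
  then show ?thesis using Sx_eqI Sx_AVI_sol by metis
qed

lemma Sx_lipschitz:
  "\<rho> * norm (Sx \<rho> H f A b z - Sx \<rho> H f A b z') \<le> norm (ftilde \<rho> H f z - ftilde \<rho> H f z')"
  by (rule AVI_sol_lipschitz[OF Htilde_strongly_monotone[OF monotone] Sx_AVI_sol Sx_AVI_sol])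

lemma continuous_on_Sx: "continuous_on UNIV (Sx \<rho> H f A b)"
proof (rule continuous_at_imp_continuous_on, intro ballI)
  fix z :: "real^'n"
  have "isCont (ftilde \<rho> H f) z" unfolding ftilde_def by (intro continuous_intros)
  then have "((\<lambda>z'. norm (ftilde \<rho> H f z' - ftilde \<rho> H f z) / \<rho>) \<longlongrightarrow> 0) (at z)"
    unfolding isCont_def by (rule tendsto_divide_zero[OF tendsto_norm_zero[OF LIM_zero]])
  moreover have "\<forall>\<^sub>F z' in at z.
      norm (Sx \<rho> H f A b z' - Sx \<rho> H f A b z) \<le> norm (ftilde \<rho> H f z' - ftilde \<rho> H f z) / \<rho>"
    using Sx_lipschitz rho by (intro always_eventually allI) (simp add: pos_le_divide_eq mult.commute)
  ultimately have "((\<lambda>z'. Sx \<rho> H f A b z' - Sx \<rho> H f A b z) \<longlongrightarrow> 0) (at z)"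
    by (rule Lim_null_comparison[rotated])
  then show "isCont (Sx \<rho> H f A b) z" unfolding isCont_def by (rule LIM_zero_cancel)
qed

lemma A_QP_constant_near_AVI_sol:
  assumes sol: "is_AVI_sol H f A b xs"
    and D: "\<And>i. i \<in> active_set A b xs \<Longrightarrow>
              (\<forall>j\<in>active_set A b xs - {i}. row j A \<bullet> D i = 0) \<and> row i A \<bullet> D i > 0"
    and descent: "\<And>i. i \<in> active_set A b xs \<Longrightarrow> (H *v xs + f) \<bullet> D i < 0"
  shows "\<exists>U. open U \<and> xs \<in> U \<and> (\<forall>z\<in>U. A_QP \<rho> H f A b z = active_set A b xs)"
proof -
  define Act where "Act = active_set A b xs"
  define S where "S = Sx \<rho> H f A b"
  define g where "g z = Htilde \<rho> H *v S z + ftilde \<rho> H f z" for z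
  have S_xs: "S xs = xs" using sol Sx_fixed_point_iff by (simp add: S_def)
  have cont_S: "continuous_on UNIV S" unfolding S_def by (rule continuous_on_Sx)
  define U where "U = (\<Inter>j\<in>-Act. {z. row j A \<bullet> S z < b $ j}) \<inter> (\<Inter>i\<in>Act. {z. g z \<bullet> D i < 0})"
  have "continuous_on UNIV g"
    unfolding g_def ftilde_def
    by (intro continuous_on_add continuous_on_const matrix_vector_mult_linear_continuous_on
        continuous_on_compose2[OF matrix_vector_mult_linear_continuous_on cont_S]) auto
  then have "open U"
    unfolding U_def
    by (intro open_Int open_INT ballI finite open_Collect_less continuous_on_inner continuous_on_const cont_S)
  moreover have "xs \<in> U"
  proof -
    have "row j A \<bullet> xs < b $ j" if "j \<notin> Act" for j
      using sol that by (auto simp: is_AVI_sol_def polyhedron_def Act_def active_set_def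
          matrix_vector_mult_row order_less_le)
    moreover have "g xs = H *v xs + f" using S_xs by (simp add: g_def Htilde_ftilde)
    ultimately show ?thesis using descent by (simp add: U_def S_xs Act_def)
  qed
  moreover have "A_QP \<rho> H f A b z = Act" if "z \<in> U" for z
    unfolding A_QP_def S_def[symmetric]
  proof (rule active_set_eq_if_descent_directions[where D = D, OF Sx_AVI_sol[folded S_def]])
    show "(A *v S z) $ j < b $ j" if "j \<notin> Act" for j
      using \<open>z \<in> U\<close> that by (simp add: U_def matrix_vector_mult_row)
    show "(Htilde \<rho> H *v S z + ftilde \<rho> H f z) \<bullet> D i < 0" if "i \<in> Act" for i
      using \<open>z \<in> U\<close> that by (simp add: U_def g_def)
  qed (use D in \<open>simp add: Act_def\<close>)
  ultimately show ?thesis unfolding Act_def by blast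
qed

end

theorem lemma2:
  fixes H :: "real^'n^'n" and f :: "real^'n" and A :: "real^'n^'m" and b :: "real^'m"
    and xs :: "real^'n" and lam :: "real^'m" and \<rho> :: real
  assumes nonempty: "polyhedron A b \<noteq> {}"
    and pd: "\<And>x. x \<noteq> 0 \<Longrightarrow> x \<bullet> ((H + transpose H) *v x) > 0"
    and sol: "is_AVI_sol H f A b xs"
    and uniq: "\<And>x. is_AVI_sol H f A b x \<Longrightarrow> x = xs"
    and licq: "\<And>c. (\<Sum>i\<in>active_set A b xs. c i *\<^sub>R row i A) = 0 \<Longrightarrow>
                    (\<forall>i\<in>active_set A b xs. c i = 0)"
    and kkt: "H *v xs + f + transpose A *v lam = 0"
    and lam_nn: "\<And>i. lam $ i \<ge> 0"
    and slack_nn: "\<And>i. (b - A *v xs) $ i \<ge> 0"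
    and compl: "lam \<bullet> (b - A *v xs) = 0"
    and lam_uniq: "\<And>l. H *v xs + f + transpose A *v l = 0 \<Longrightarrow> (\<forall>i. l $ i \<ge> 0)
                     \<Longrightarrow> l \<bullet> (b - A *v xs) = 0 \<Longrightarrow> l = lam"
    and strict: "\<And>i. i \<in> active_set A b xs \<Longrightarrow> lam $ i > 0"
    and rho: "\<rho> > 0"
  shows "\<exists>U. open U \<and> xs \<in> U \<and> (\<forall>z\<in>U. A_QP \<rho> H f A b z = active_set A b xs)"
proof -
  have monotone: "0 \<le> x \<bullet> ((H + transpose H) *v x)" for x
    using pd[of x] by (cases "x = 0") auto
  have "\<forall>i\<in>active_set A b xs. \<exists>d. (\<forall>j\<in>active_set A b xs - {i}. row j A \<bullet> d = 0) \<and> row i A \<bullet> d > 0"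
    using independent_rows_separating_direction[OF licq finite] by blast
  then obtain D where D: "\<And>i. i \<in> active_set A b xs \<Longrightarrow>
      (\<forall>j\<in>active_set A b xs - {i}. row j A \<bullet> D i = 0) \<and> row i A \<bullet> D i > 0"
    by metis
  have "(H *v xs + f) \<bullet> D i < 0" if "i \<in> active_set A b xs" for i
    using kkt_descent_direction[OF kkt lam_nn slack_nn compl that strict[OF that]] D[OF that] by blast
  then show ?thesis using A_QP_constant_near_AVI_sol[OF rho monotone nonempty sol D] by blast
qed

end
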